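(* Let $n\ge1$, $0<\delta\le1/3$, $b=\delta n$ (a positive integer), $B=2^b$, $\eta>0$ with $B=\eta K$, and let $C\ge3$ be an integer with $Cb\le n$. Let $\mathcal{K}$ consist of $K$ indices chosen independently and uniformly at random from $\mathbb{F}_2^n$, and form the bipartite graph with left nodes $\mathcal{K}$, right nodes $\{(c,\mathbf{j}):c\in[C],\mathbf{j}\in\mathbb{F}_2^b\}$, and an edge between $\mathbf{k}$ and $(c,\mathcal{H}_c(\mathbf{k}))$ for each $c\in[C]$, where $\mathcal{H}_c(\mathbf{k})=(k[(c-1)b+1],\dots,k[cb])$. Then there is a sufficiently small constant $\varepsilon>0$ such that, with probability at least $1-O(1/K)$, this graph is an $(\varepsilon,1/2,C)$-expander.
   Context: A $C$-regular bipartite graph with $K$ left nodes and $C$ groups of $B=\eta K$ right nodes is an $(\varepsilon,1/2,C)$-expander if for every subset $\mathcal{S}$ of left nodes with $|\mathcal{S}|\le\varepsilon K$ there exists a group $c\in[C]$ such that the set $\mathcal{N}_c(\mathcal{S})$ of right nodes in group $c$ adjacent to $\mathcal{S}$ satisfies $|\mathcal{N}_c(\mathcal{S})|>|\mathcal{S}|/2$. Here $[C]=\{1,\dots,C\}$ and $\mathbf{k}=[k[1],\dots,k[n]]^T$. *)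

theory Defs
  imports "HOL-Probability.Probability"
begin

text \<open>A vector k in F_2^n is modelled as an extensional map {1..n} -> bool
  (k j = k[j]).  The K random indices are a map i in {0..<K} to such vectors;
  left node i carries the index k i (repetitions are allowed, since the
  indices are drawn independently).\<close>

definition idx_space :: "nat \<Rightarrow> nat \<Rightarrow> (nat \<Rightarrow> nat \<Rightarrow> bool) set" where
  "idx_space K n = {0..<K} \<rightarrow>\<^sub>E ({1..n} \<rightarrow>\<^sub>E (UNIV :: bool set))"

definition hashc :: "nat \<Rightarrow> nat \<Rightarrow> (nat \<Rightarrow> bool) \<Rightarrow> (nat \<Rightarrow> bool)" where
  "hashc b c k = (\<lambda>j\<in>{1..b}. k ((c - 1) * b + j))"

definition nbhd :: "nat \<Rightarrow> nat \<Rightarrow> (nat \<Rightarrow> nat \<Rightarrow> bool) \<Rightarrow> nat set \<Rightarrow> (nat \<Rightarrow> bool) set" where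
  "nbhd b c k S = (\<lambda>i. hashc b c (k i)) ` S"

definition is_expander ::
  "real \<Rightarrow> real \<Rightarrow> nat \<Rightarrow> nat \<Rightarrow> nat \<Rightarrow> (nat \<Rightarrow> nat \<Rightarrow> bool) \<Rightarrow> bool" where
  "is_expander eps d C b K k \<longleftrightarrow>
     (\<forall>S \<subseteq> {0..<K}. S \<noteq> {} \<and> real (card S) \<le> eps * real K \<longrightarrow>
        (\<exists>c\<in>{1..C}. real (card (nbhd b c k S)) > d * real (card S)))"

end

theory Submission
  imports Defs
begin

text \<open>If the graph is not an expander, some set \<open>S\<close> of \<open>2 \<le> s \<le> \<epsilon>K\<close> left nodes has at
  most \<open>t = \<lfloor>s/2\<rfloor>\<close> neighbours in each of the groups 1, 2, 3. Enlarging these neighbourhoods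
  to sets \<open>T\<^sub>1, T\<^sub>2, T\<^sub>3\<close> of exactly \<open>t\<close> blocks, every index in \<open>S\<close> has its first three blocks
  in \<open>T\<^sub>1 \<times> T\<^sub>2 \<times> T\<^sub>3\<close>, an event of probability \<open>(t/B)\<^sup>3\<^sup>s\<close>. The union bound over \<open>S\<close> and
  the \<open>T\<^sub>c\<close> bounds the failure probability by \<open>\<Sum>\<^sub>s C(K,s) (C(B,t) (t/B)\<^sup>s)\<^sup>3\<close>, and the
  estimate \<open>C(m,j) \<le> (e m/j)\<^sup>j\<close> shows that for small \<open>\<epsilon>\<close> the \<open>s\<close>-th term is \<open>O(2\<^sup>-\<^sup>s/K)\<close>.\<close>

lemma power_div_fact_le_exp:
  fixes x :: real
  assumes "0 \<le> x"
  shows "x ^ n / fact n \<le> exp x"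
proof -
  have exp_sums: "(\<lambda>n. x ^ n / fact n) sums exp x"
    using exp_converges[of x] by (simp add: divide_inverse_commute scaleR_conv_of_real)
  have "(\<Sum>m\<in>{n}. x ^ m / fact m) \<le> (\<Sum>m. x ^ m / fact m)"
    by (rule sum_le_suminf) (use exp_sums assms in \<open>auto simp: sums_iff\<close>)
  with exp_sums show ?thesis by (simp add: sums_iff)
qed

lemma binomial_le_pow_div_fact: "real (n choose k) \<le> real n ^ k / fact k"
proof -
  have "real (n choose k) * fact k \<le> real n ^ k"
    using of_nat_mono[OF binomial_fact_pow[of n k], where 'a=real] by simp
  then show ?thesis by (simp add: field_simps)
qed

lemma binomial_le_exp_mult_div_power:
  assumes "0 < k"
  shows "real (n choose k) \<le> (exp 1 * real n / real k) ^ k"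
proof -
  have "real (n choose k) \<le> (real n / real k) ^ k * (real k ^ k / fact k)"
    using binomial_le_pow_div_fact[of n k] assms by (simp add: power_divide)
  also have "\<dots> \<le> (real n / real k) ^ k * exp 1 ^ k"
    by (intro mult_left_mono) (simp_all add: power_div_fact_le_exp flip: exp_of_nat_mult)
  also have "\<dots> = (exp 1 * real n / real k) ^ k"
    by (simp add: mult.commute flip: power_mult_distrib)
  finally show ?thesis .
qed

lemma binomial_mult_power_le:
  assumes "t \<le> s"
  shows "real (B choose t) * (real t / real B) ^ s \<le> exp (real t) * (real t / real B) ^ (s - t)"
proof -
  have "real (B choose t) * (real t / real B) ^ t \<le> real B ^ t / fact t * (real t / real B) ^ t"
    by (intro mult_right_mono binomial_le_pow_div_fact) simp
  also have "\<dots> \<le> real t ^ t / fact t"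
    by (cases "B = 0") (auto simp: power_divide power_0_left)
  also have "\<dots> \<le> exp (real t)"
    by (simp add: power_div_fact_le_exp)
  finally have "real (B choose t) * (real t / real B) ^ t \<le> exp (real t)" .
  then have "real (B choose t) * (real t / real B) ^ t * (real t / real B) ^ (s - t)
      \<le> exp (real t) * (real t / real B) ^ (s - t)"
    by (intro mult_right_mono) simp_all
  with assms show ?thesis
    by (simp add: mult.assoc flip: power_add)
qed

lemma mult_sixteenth_power_le:
  assumes "2 \<le> s"
  shows "real s * (1/16) ^ (s div 2 - 1) \<le> 64 * (1/2) ^ s"
proof -
  have "(4::real) ^ s \<le> 4 * 4 ^ (2 * (s div 2))"
    using power_increasing[of "s - 1" "2 * (s div 2)" "4::real"] assms
    by (cases s) auto
  also have "\<dots> = 64 * 16 ^ (s div 2 - 1)"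
    using assms by (cases "s div 2") (auto simp: power_mult)
  finally have "(1/16::real) ^ (s div 2 - 1) \<le> 64 * (1/4) ^ s"
    by (simp add: power_one_over field_simps)
  moreover have "real s \<le> 2 ^ s"
    by (metis less_exp less_imp_le of_nat_le_iff of_nat_numeral of_nat_power)
  ultimately have "real s * (1/16) ^ (s div 2 - 1) \<le> 2 ^ s * (64 * (1/4) ^ s)"
    by (intro mult_mono) auto
  also have "\<dots> = 64 * (1/2) ^ s"
    by (simp add: power_one_over field_simps flip: power_mult_distrib)
  finally show ?thesis .
qed

lemma union_term_le_power:
  fixes \<eta> :: real
  assumes "0 < \<eta>" and "0 < K" and B: "real B = \<eta> * real K"
    and "2 \<le> s" and small: "real s \<le> 2 * \<eta> * real K"
  shows "real (K choose s) * (real (B choose (s div 2)) * (real (s div 2) / real B) ^ s) ^ 3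
    \<le> (exp 1 / (2 * \<eta>)) ^ s * (exp 3 * (real s / real K / (2 * \<eta>))) ^ (s div 2)"
proof -
  define t where "t = s div 2"
  define r where "r = real s / real K"
  define p where "p = real t / real B"
  \<comment> \<open>As \<open>t \<le> s/2\<close>, the \<open>3(s - t)\<close> factors \<open>p \<le> r/(2\<eta>)\<close> cancel \<open>(1/r)\<^sup>s\<close> and leave \<open>r\<^sup>t\<close>.\<close>
  have t: "1 \<le> t" "s + t \<le> 3 * (s - t)"
    using \<open>2 \<le> s\<close> by (auto simp: t_def)
  have "r > 0"
    using \<open>0 < K\<close> \<open>2 \<le> s\<close> by (simp add: r_def)
  have p_le: "p \<le> r / (2 * \<eta>)"
    using \<open>0 < \<eta>\<close> \<open>0 < K\<close> B by (simp add: p_def r_def t_def field_simps)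
  have "r / (2 * \<eta>) \<le> 1"
    using small \<open>0 < \<eta>\<close> \<open>0 < K\<close> by (simp add: r_def field_simps)
  have "0 \<le> p"
    by (simp add: p_def)
  have "real (K choose s) * (real (B choose t) * p ^ s) ^ 3
      \<le> (exp 1 / r) ^ s * (exp (real t) * p ^ (s - t)) ^ 3"
  proof (rule mult_mono[OF _ power_mono])
    show "real (K choose s) \<le> (exp 1 / r) ^ s"
      using binomial_le_exp_mult_div_power[of s K] \<open>2 \<le> s\<close> by (simp add: r_def field_simps)
    show "real (B choose t) * p ^ s \<le> exp (real t) * p ^ (s - t)"
      using binomial_mult_power_le[of t s B] by (simp add: p_def t_def)
  qed (use \<open>r > 0\<close> \<open>0 \<le> p\<close> in auto)
  also have "\<dots> = (exp 1 / r) ^ s * exp 3 ^ t * p ^ (3 * (s - t))"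
    by (simp add: power_mult_distrib mult.commute flip: power_mult exp_of_nat_mult)
  also have "\<dots> \<le> (exp 1 / r) ^ s * exp 3 ^ t * (r / (2 * \<eta>)) ^ (s + t)"
  proof -
    have "p ^ (3 * (s - t)) \<le> p ^ (s + t)"
      using \<open>0 \<le> p\<close> p_le \<open>r / (2 * \<eta>) \<le> 1\<close> t by (intro power_decreasing) auto
    also have "\<dots> \<le> (r / (2 * \<eta>)) ^ (s + t)"
      using p_le \<open>0 \<le> p\<close> by (rule power_mono)
    finally show ?thesis
      using \<open>r > 0\<close> by (intro mult_left_mono) auto
  qed
  also have "\<dots> = (exp 1 / (2 * \<eta>)) ^ s * (exp 3 * (r / (2 * \<eta>))) ^ t"
    using \<open>r > 0\<close> by (simp add: power_add power_mult_distrib field_simps)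
  finally show ?thesis
    by (simp add: p_def r_def t_def)
qed

lemma power_le_half_power:
  fixes \<eta> A Q :: real
  assumes "0 < \<eta>" and "0 < K" and "2 \<le> s"
    and A: "1 \<le> A" "exp 1 / (2 * \<eta>) \<le> A" and Q: "Q = A\<^sup>2 * exp 3 / (2 * \<eta>)"
    and small: "Q * (real s / real K) \<le> 1/16"
  shows "(exp 1 / (2 * \<eta>)) ^ s * (exp 3 * (real s / real K / (2 * \<eta>))) ^ (s div 2)
    \<le> 64 * A * Q / real K * (1/2) ^ s"
proof -
  define t where "t = s div 2"
  define r where "r = real s / real K"
  have "0 < t" "s \<le> 2 * t + 1"
    using \<open>2 \<le> s\<close> by (auto simp: t_def)
  have "0 \<le> Q * r"
    using Q \<open>0 < \<eta>\<close> by (simp add: r_def)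
  have "(exp 1 / (2 * \<eta>)) ^ s \<le> A ^ s"
    using A \<open>0 < \<eta>\<close> by (intro power_mono) auto
  also have "\<dots> \<le> A ^ (2 * t + 1)"
    using A \<open>s \<le> 2 * t + 1\<close> by (intro power_increasing) auto
  finally have "(exp 1 / (2 * \<eta>)) ^ s \<le> A ^ (2 * t + 1)" .
  then have "(exp 1 / (2 * \<eta>)) ^ s * (exp 3 * (r / (2 * \<eta>))) ^ t
      \<le> A ^ (2 * t + 1) * (exp 3 * (r / (2 * \<eta>))) ^ t"
    using \<open>0 < \<eta>\<close> \<open>2 \<le> s\<close> by (intro mult_right_mono) (auto simp: r_def)
  also have "\<dots> = A * (A\<^sup>2 * (exp 3 * (r / (2 * \<eta>)))) ^ t"
    by (simp only: power_add power_one_right power_mult_distrib mult_ac flip: power_mult)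
  also have "\<dots> = A * (Q * r) ^ t"
    by (simp add: Q mult.assoc)
  also have "\<dots> = A * (Q * r) * (Q * r) ^ (t - 1)"
    using \<open>0 < t\<close> by (simp add: power_eq_if)
  also have "\<dots> \<le> A * (Q * r) * (1/16) ^ (t - 1)"
  proof (intro mult_left_mono power_mono)
    show "Q * r \<le> 1/16"
      using small by (simp add: r_def)
  qed (use \<open>1 \<le> A\<close> \<open>0 \<le> Q * r\<close> in auto)
  also have "\<dots> = A * Q / real K * (real s * (1/16) ^ (t - 1))"
    by (simp add: r_def)
  also have "\<dots> \<le> A * Q / real K * (64 * (1/2) ^ s)"
    using mult_sixteenth_power_le[OF \<open>2 \<le> s\<close>] A Q \<open>0 < \<eta>\<close>
    by (intro mult_left_mono) (auto simp: t_def)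
  finally show ?thesis
    by (simp add: r_def t_def mult_ac)
qed

definition blocks_in ::
  "nat \<Rightarrow> (nat \<Rightarrow> bool) set \<Rightarrow> (nat \<Rightarrow> bool) set \<Rightarrow> (nat \<Rightarrow> bool) set \<Rightarrow> (nat \<Rightarrow> bool) \<Rightarrow> bool" where
  "blocks_in b T1 T2 T3 v \<longleftrightarrow> hashc b 1 v \<in> T1 \<and> hashc b 2 v \<in> T2 \<and> hashc b 3 v \<in> T3"

lemma block_decomposition:
  fixes C b j :: nat
  assumes "j \<in> {1..C * b}"
  shows "\<exists>c\<in>{1..C}. \<exists>i\<in>{1..b}. j = (c - 1) * b + i"
proof -
  have "0 < b"
    using assms by (cases b) auto
  have "(j - 1) div b < C"
    using assms \<open>0 < b\<close> by (auto simp: div_less_iff_less_mult)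
  then have "(j - 1) div b + 1 \<in> {1..C}"
    by simp
  moreover have "(j - 1) mod b + 1 \<in> {1..b}"
    using \<open>0 < b\<close> by (simp add: Suc_leI)
  moreover have "j = ((j - 1) div b + 1 - 1) * b + ((j - 1) mod b + 1)"
    using assms by simp
  ultimately show ?thesis
    by blast
qed

lemma PiE_eq_if_hashc_eq:
  assumes "v \<in> {1..n} \<rightarrow>\<^sub>E (UNIV :: bool set)" and "w \<in> {1..n} \<rightarrow>\<^sub>E (UNIV :: bool set)"
    and hash_eq: "\<forall>c\<in>{1..C}. hashc b c v = hashc b c w"
    and tail_eq: "\<forall>j\<in>{C * b<..n}. v j = w j"
  shows "v = w"
proof
  fix j
  show "v j = w j"
  proof (cases "j \<in> {1..C * b}")
    case True
    then obtain c i where "c \<in> {1..C}" "i \<in> {1..b}" and j: "j = (c - 1) * b + i"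
      using block_decomposition by blast
    then show ?thesis
      using fun_cong[OF bspec[OF hash_eq], of c i] by (simp add: hashc_def)
  next
    case False
    then show ?thesis
      using assms(1,2) tail_eq by (cases "j \<in> {1..n}") (auto simp: PiE_def extensional_def)
  qed
qed

lemma card_blocks_in_le:
  assumes "3 * b \<le> n" and "finite T1" "finite T2" "finite T3"
  shows "card {v \<in> {1..n} \<rightarrow>\<^sub>E (UNIV :: bool set). blocks_in b T1 T2 T3 v}
    \<le> card T1 * card T2 * card T3 * 2 ^ (n - 3 * b)"
proof -
  let ?A = "{v \<in> {1..n} \<rightarrow>\<^sub>E (UNIV :: bool set). blocks_in b T1 T2 T3 v}"
  define f where "f v = (hashc b 1 v, hashc b 2 v, hashc b 3 v, restrict v {3 * b<..n})"
    for v :: "nat \<Rightarrow> bool"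
  have "inj_on f ?A"
  proof (rule inj_onI)
    fix v w assume "v \<in> ?A" "w \<in> ?A" "f v = f w"
    moreover have "\<forall>j\<in>{3 * b<..n}. v j = w j"
      using \<open>f v = f w\<close> by (metis f_def restrict_apply' snd_conv)
    moreover have "{1..3::nat} = {1, 2, 3}"
      by auto
    ultimately show "v = w"
      by (intro PiE_eq_if_hashc_eq[where C = 3]) (auto simp: f_def)
  qed
  moreover have "f ` ?A \<subseteq> T1 \<times> T2 \<times> T3 \<times> ({3 * b<..n} \<rightarrow>\<^sub>E (UNIV :: bool set))"
    by (auto simp: f_def blocks_in_def)
  ultimately have "card ?A \<le> card (T1 \<times> T2 \<times> T3 \<times> ({3 * b<..n} \<rightarrow>\<^sub>E (UNIV :: bool set)))"
    using assms by (intro card_inj_on_le) (auto simp: finite_PiE)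
  also have "\<dots> = card T1 * card T2 * card T3 * 2 ^ (n - 3 * b)"
    by (simp add: card_cartesian_product card_PiE)
  finally show ?thesis .
qed

lemma card_idx_space_confined:
  assumes "S \<subseteq> {0..<K}"
  shows "card {k \<in> idx_space K n. \<forall>i\<in>S. P (k i)}
    = card {v \<in> {1..n} \<rightarrow>\<^sub>E (UNIV :: bool set). P v} ^ card S * 2 ^ (n * (K - card S))"
proof -
  let ?V = "{1..n} \<rightarrow>\<^sub>E (UNIV :: bool set)"
  have finite_S: "finite S"
    using assms finite_subset by blast
  have "{k \<in> idx_space K n. \<forall>i\<in>S. P (k i)} = PiE {0..<K} (\<lambda>i. if i \<in> S then {v \<in> ?V. P v} else ?V)"
    using assms by (auto simp: idx_space_def PiE_iff split: if_splits intro: extensional_arb)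
  then have "card {k \<in> idx_space K n. \<forall>i\<in>S. P (k i)}
      = (\<Prod>i\<in>{0..<K}. if i \<in> S then card {v \<in> ?V. P v} else card ?V)"
    by (simp add: card_PiE if_distrib)
  also have "\<dots> = card {v \<in> ?V. P v} ^ card S * card ?V ^ (K - card S)"
    using assms finite_S
    by (simp add: prod.If_cases Int_absorb1 Diff_eq[symmetric] card_Diff_subset)
  finally show ?thesis
    by (simp add: card_PiE power_mult)
qed

definition block_sets :: "nat \<Rightarrow> nat \<Rightarrow> (nat \<Rightarrow> bool) set set" where
  "block_sets b t = {T. T \<subseteq> {1..b} \<rightarrow>\<^sub>E (UNIV :: bool set) \<and> card T = t}"

lemma finite_block_sets: "finite (block_sets b t)"
  by (rule finite_subset[of _ "Pow ({1..b} \<rightarrow>\<^sub>E UNIV)"]) (auto simp: block_sets_def finite_PiE)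

lemma card_block_sets: "card (block_sets b t) = 2 ^ b choose t"
  using n_subsets[of "{1..b} \<rightarrow>\<^sub>E (UNIV :: bool set)" t] by (simp add: block_sets_def finite_PiE card_PiE)

lemma non_expander_witness:
  fixes eps :: real
  assumes "3 \<le> C" and room: "eps * real K \<le> 2 * 2 ^ b"
    and "\<not> is_expander eps (1/2) C b K k"
  obtains S T1 T2 T3 where "S \<subseteq> {0..<K}" "2 \<le> card S" "real (card S) \<le> eps * real K"
    "T1 \<in> block_sets b (card S div 2)" "T2 \<in> block_sets b (card S div 2)"
    "T3 \<in> block_sets b (card S div 2)" "\<forall>i\<in>S. blocks_in b T1 T2 T3 (k i)"
proof -
  let ?Bs = "{1..b} \<rightarrow>\<^sub>E (UNIV :: bool set)"
  obtain S where S: "S \<subseteq> {0..<K}" "S \<noteq> {}" "real (card S) \<le> eps * real K"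
    and few: "\<forall>c\<in>{1..C}. real (card (nbhd b c k S)) \<le> 1/2 * real (card S)"
    using assms(3) unfolding is_expander_def by (auto simp: not_less)
  have "finite S"
    using S(1) finite_subset by blast
  have nbhd_le: "card (nbhd b c k S) \<le> card S div 2" if "c \<in> {1, 2, 3}" for c
  proof -
    have "real (card (nbhd b c k S)) \<le> 1/2 * real (card S)"
      using few that \<open>3 \<le> C\<close> by auto
    then show ?thesis
      by linarith
  qed
  have "1 \<le> card (nbhd b 1 k S)"
    using \<open>finite S\<close> S(2) by (simp add: nbhd_def Suc_le_eq card_gt_0_iff)
  then have "2 \<le> card S"
    using nbhd_le[of 1] by simp
  have "real (card S div 2) \<le> real (card S) / 2"
    by linarith
  also have "\<dots> \<le> real (card ?Bs)"
    using S(3) room by (simp add: card_PiE)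
  finally have "card S div 2 \<le> card ?Bs"
    by linarith
  have "\<exists>T. nbhd b c k S \<subseteq> T \<and> T \<in> block_sets b (card S div 2)" if "c \<in> {1, 2, 3}" for c
  proof -
    have "nbhd b c k S \<subseteq> ?Bs"
      by (auto simp: nbhd_def hashc_def)
    then show ?thesis
      using exists_subset_between[OF nbhd_le[OF that] \<open>card S div 2 \<le> card ?Bs\<close>]
      by (auto simp: block_sets_def finite_PiE)
  qed
  then obtain T1 T2 T3 where "nbhd b 1 k S \<subseteq> T1" "T1 \<in> block_sets b (card S div 2)"
    "nbhd b 2 k S \<subseteq> T2" "T2 \<in> block_sets b (card S div 2)"
    "nbhd b 3 k S \<subseteq> T3" "T3 \<in> block_sets b (card S div 2)"
    by (meson insertCI)
  then show ?thesis
    using S \<open>2 \<le> card S\<close> by (intro that[of S T1 T2 T3]) (auto simp: blocks_in_def nbhd_def)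
qed

lemma card_confined_blocks_le:
  assumes "S \<subseteq> {0..<K}" and "3 * b \<le> n"
    and "T1 \<in> block_sets b t" "T2 \<in> block_sets b t" "T3 \<in> block_sets b t"
  shows "real (card {k \<in> idx_space K n. \<forall>i\<in>S. blocks_in b T1 T2 T3 (k i)})
    \<le> 2 ^ (n * K) * (real t / 2 ^ b) ^ (3 * card S)"
proof -
  let ?s = "card S"
  have "?s \<le> K"
    using assms(1) card_mono[of "{0..<K}" S] by simp
  have finite_block: "finite T" if "T \<in> block_sets b t" for T
    using that finite_subset[of T "{1..b} \<rightarrow>\<^sub>E UNIV"] by (simp add: block_sets_def finite_PiE)
  have T: "finite T1" "finite T2" "finite T3" "card T1 = t" "card T2 = t" "card T3 = t"
    using finite_block[OF assms(3)] finite_block[OF assms(4)] finite_block[OF assms(5)] assms(3-5)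
    by (simp_all add: block_sets_def)
  have "real (card {v \<in> {1..n} \<rightarrow>\<^sub>E (UNIV :: bool set). blocks_in b T1 T2 T3 v})
      \<le> real t ^ 3 * 2 ^ (n - 3 * b)"
    using of_nat_mono[OF card_blocks_in_le[OF assms(2) T(1-3)], where 'a = real]
    by (simp add: T power3_eq_cube)
  then have "real (card {k \<in> idx_space K n. \<forall>i\<in>S. blocks_in b T1 T2 T3 (k i)})
      \<le> (real t ^ 3 * 2 ^ (n - 3 * b)) ^ ?s * 2 ^ (n * (K - ?s))"
    unfolding card_idx_space_confined[OF assms(1)] of_nat_mult of_nat_power of_nat_numeral
    by (intro mult_right_mono power_mono) simp_all
  also have "\<dots> = 2 ^ (n * K) * (real t / 2 ^ b) ^ (3 * ?s)"
  proof -
    obtain m where m: "n = 3 * b + m"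
      using assms(2) le_Suc_ex by blast
    obtain l where l: "K = ?s + l"
      using \<open>?s \<le> K\<close> le_Suc_ex by blast
    have "n * K = 3 * b * ?s + (m * ?s + n * l)"
      using m l by (simp add: algebra_simps)
    then show ?thesis
      using m l by (simp add: power_add power_divide power_mult_distrib field_simps flip: power_mult)
  qed
  finally show ?thesis .
qed

lemma card_non_expanders_le:
  fixes eps :: real
  assumes "3 \<le> C" and "3 * b \<le> n" and room: "eps * real K \<le> 2 * 2 ^ b"
  shows "real (card {k \<in> idx_space K n. \<not> is_expander eps (1/2) C b K k})
    \<le> 2 ^ (n * K) * (\<Sum>s\<in>{s\<in>{2..K}. real s \<le> eps * real K}.
         real (K choose s) * (real (2 ^ b choose (s div 2)) * (real (s div 2) / real (2 ^ b)) ^ s) ^ 3)"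
proof -
  let ?Sizes = "{s\<in>{2..K}. real s \<le> eps * real K}"
  let ?Subsets = "\<lambda>s. {S. S \<subseteq> {0..<K} \<and> card S = s}"
  let ?Blocks = "\<lambda>s. block_sets b (s div 2) \<times> block_sets b (s div 2) \<times> block_sets b (s div 2)"
  let ?E = "\<lambda>S (T1, T2, T3). {k \<in> idx_space K n. \<forall>i\<in>S. blocks_in b T1 T2 T3 (k i)}"
  have finite_subsets: "finite (?Subsets s)" for s
    by (rule finite_subset[of _ "Pow {0..<K}"]) auto
  have "{k \<in> idx_space K n. \<not> is_expander eps (1/2) C b K k}
      \<subseteq> (\<Union>s\<in>?Sizes. \<Union>S\<in>?Subsets s. \<Union>TT\<in>?Blocks s. ?E S TT)"
  proof
    fix k assume k: "k \<in> {k \<in> idx_space K n. \<not> is_expander eps (1/2) C b K k}"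
    then obtain S T1 T2 T3 where S: "S \<subseteq> {0..<K}" "2 \<le> card S" "real (card S) \<le> eps * real K"
      and T: "T1 \<in> block_sets b (card S div 2)" "T2 \<in> block_sets b (card S div 2)"
        "T3 \<in> block_sets b (card S div 2)"
      and confined: "\<forall>i\<in>S. blocks_in b T1 T2 T3 (k i)"
      using non_expander_witness[OF \<open>3 \<le> C\<close> room] by blast
    have "card S \<le> K"
      using S(1) card_mono[of "{0..<K}" S] by simp
    with S T k confined have "card S \<in> ?Sizes" "S \<in> ?Subsets (card S)"
      "(T1, T2, T3) \<in> ?Blocks (card S)" "k \<in> ?E S (T1, T2, T3)"
      by auto
    then show "k \<in> (\<Union>s\<in>?Sizes. \<Union>S\<in>?Subsets s. \<Union>TT\<in>?Blocks s. ?E S TT)"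
      by blast
  qed
  then have "card {k \<in> idx_space K n. \<not> is_expander eps (1/2) C b K k}
      \<le> card (\<Union>s\<in>?Sizes. \<Union>S\<in>?Subsets s. \<Union>TT\<in>?Blocks s. ?E S TT)"
  proof (rule card_mono[rotated])
    have "(\<Union>s\<in>?Sizes. \<Union>S\<in>?Subsets s. \<Union>TT\<in>?Blocks s. ?E S TT) \<subseteq> idx_space K n"
      by (auto split: prod.splits)
    then show "finite (\<Union>s\<in>?Sizes. \<Union>S\<in>?Subsets s. \<Union>TT\<in>?Blocks s. ?E S TT)"
      by (rule finite_subset) (simp add: idx_space_def finite_PiE)
  qed
  also have "\<dots> \<le> (\<Sum>s\<in>?Sizes. \<Sum>S\<in>?Subsets s. \<Sum>TT\<in>?Blocks s. card (?E S TT))"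
  proof (rule order.trans[OF card_UN_le], simp, rule sum_mono)
    fix s
    show "card (\<Union>S\<in>?Subsets s. \<Union>TT\<in>?Blocks s. ?E S TT)
        \<le> (\<Sum>S\<in>?Subsets s. \<Sum>TT\<in>?Blocks s. card (?E S TT))"
      by (rule order.trans[OF card_UN_le[OF finite_subsets] sum_mono[OF card_UN_le]])
        (simp add: finite_block_sets)
  qed
  finally have "real (card {k \<in> idx_space K n. \<not> is_expander eps (1/2) C b K k})
      \<le> real (\<Sum>s\<in>?Sizes. \<Sum>S\<in>?Subsets s. \<Sum>TT\<in>?Blocks s. card (?E S TT))"
    by (rule of_nat_mono)
  also have "\<dots> = (\<Sum>s\<in>?Sizes. \<Sum>S\<in>?Subsets s. \<Sum>TT\<in>?Blocks s. real (card (?E S TT)))"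
    by simp
  also have "\<dots> \<le> (\<Sum>s\<in>?Sizes. \<Sum>S\<in>?Subsets s. \<Sum>TT\<in>?Blocks s.
      2 ^ (n * K) * (real (s div 2) / 2 ^ b) ^ (3 * s))"
  proof (intro sum_mono)
    fix s S TT assume "S \<in> ?Subsets s" "TT \<in> ?Blocks s"
    moreover obtain T1 T2 T3 where "TT = (T1, T2, T3)"
      by (cases TT) blast
    ultimately show "real (card (?E S TT)) \<le> 2 ^ (n * K) * (real (s div 2) / 2 ^ b) ^ (3 * s)"
      using card_confined_blocks_le[OF _ \<open>3 * b \<le> n\<close>, of S K T1 "s div 2" T2 T3] by auto
  qed
  also have "\<dots> = (\<Sum>s\<in>?Sizes. real (K choose s) * (real (2 ^ b choose (s div 2)) ^ 3
      * (2 ^ (n * K) * (real (s div 2) / 2 ^ b) ^ (3 * s))))"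
    by (simp add: n_subsets card_cartesian_product card_block_sets power3_eq_cube mult.assoc)
  also have "\<dots> = 2 ^ (n * K) * (\<Sum>s\<in>?Sizes.
      real (K choose s) * (real (2 ^ b choose (s div 2)) * (real (s div 2) / real (2 ^ b)) ^ s) ^ 3)"
    unfolding sum_distrib_left by (intro sum.cong) (simp_all add: power_mult_distrib power_mult mult_ac)
  finally show ?thesis .
qed

lemma sum_union_bound_terms_le:
  fixes \<eta> eps A Q :: real
  assumes "0 < \<eta>" and "0 < K" and B: "real B = \<eta> * real K" and "eps \<le> 2 * \<eta>"
    and A: "1 \<le> A" "exp 1 / (2 * \<eta>) \<le> A" and Q: "Q = A\<^sup>2 * exp 3 / (2 * \<eta>)"
    and small: "Q * eps \<le> 1/16"
  shows "(\<Sum>s\<in>{s\<in>{2..K}. real s \<le> eps * real K}.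
      real (K choose s) * (real (B choose (s div 2)) * (real (s div 2) / real B) ^ s) ^ 3)
    \<le> 128 * A * Q / real K"
proof -
  have "0 < Q"
    using A Q \<open>0 < \<eta>\<close> by simp
  have "(\<Sum>s\<in>{s\<in>{2..K}. real s \<le> eps * real K}.
        real (K choose s) * (real (B choose (s div 2)) * (real (s div 2) / real B) ^ s) ^ 3)
      \<le> (\<Sum>s\<in>{s\<in>{2..K}. real s \<le> eps * real K}. 64 * A * Q / real K * (1/2) ^ s)"
  proof (intro sum_mono)
    fix s assume s: "s \<in> {s\<in>{2..K}. real s \<le> eps * real K}"
    then have "2 \<le> s" and s_le: "real s / real K \<le> eps"
      using \<open>0 < K\<close> by (auto simp: field_simps)
    moreover have "real s \<le> eps * real K"
      using s by simp
    ultimately have "real s \<le> 2 * \<eta> * real K"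
      using mult_right_mono[OF \<open>eps \<le> 2 * \<eta>\<close>, of "real K"] by linarith
    moreover have "Q * (real s / real K) \<le> Q * eps"
      using s_le \<open>0 < Q\<close> by (intro mult_left_mono) simp_all
    then have "Q * (real s / real K) \<le> 1/16"
      using small by linarith
    ultimately show "real (K choose s) * (real (B choose (s div 2)) * (real (s div 2) / real B) ^ s) ^ 3
        \<le> 64 * A * Q / real K * (1/2) ^ s"
      using order.trans[OF union_term_le_power[OF \<open>0 < \<eta>\<close> \<open>0 < K\<close> B \<open>2 \<le> s\<close>]
        power_le_half_power[OF \<open>0 < \<eta>\<close> \<open>0 < K\<close> \<open>2 \<le> s\<close> A Q]]
      by blast
  qed
  also have "\<dots> = 64 * A * Q / real K * (\<Sum>s\<in>{s\<in>{2..K}. real s \<le> eps * real K}. (1/2) ^ s)"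
    by (simp add: sum_distrib_left)
  also have "\<dots> \<le> 64 * A * Q / real K * 2"
    using geometric_sum_less[of "1/2::real" "{s\<in>{2..K}. real s \<le> eps * real K}"] A \<open>0 < Q\<close>
    by (intro mult_left_mono) auto
  finally show ?thesis
    by simp
qed

lemma measure_pmf_of_set_Collect:
  assumes "finite \<Omega>" and "\<Omega> \<noteq> {}"
  shows "measure_pmf.prob (pmf_of_set \<Omega>) {x. P x} = 1 - real (card {x \<in> \<Omega>. \<not> P x}) / real (card \<Omega>)"
proof -
  have "\<Omega> = (\<Omega> \<inter> {x. P x}) \<union> {x \<in> \<Omega>. \<not> P x}"
    by auto
  then have card_split: "card \<Omega> = card (\<Omega> \<inter> {x. P x}) + card {x \<in> \<Omega>. \<not> P x}"
    using assms(1) by (metis (no_types, lifting) card_Un_disjoint finite_Un disjoint_iff IntD2 mem_Collect_eq)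
  have "0 < card \<Omega>"
    using assms by (simp add: card_gt_0_iff)
  have "measure_pmf.prob (pmf_of_set \<Omega>) {x. P x} = real (card (\<Omega> \<inter> {x. P x})) / real (card \<Omega>)"
    by (rule measure_pmf_of_set[OF assms(2,1)])
  also have "\<dots> = (real (card \<Omega>) - real (card {x \<in> \<Omega>. \<not> P x})) / real (card \<Omega>)"
    by (subst (2) card_split) simp
  also have "\<dots> = 1 - real (card {x \<in> \<Omega>. \<not> P x}) / real (card \<Omega>)"
    using \<open>0 < card \<Omega>\<close> by (simp add: diff_divide_distrib)
  finally show ?thesis .
qed

lemma prob_expander_ge:
  fixes \<eta> eps A Q :: real
  assumes "0 < \<eta>" and "3 \<le> C" and K: "(2::real) ^ b = \<eta> * real K" and "C * b \<le> n"
    and "eps \<le> 2 * \<eta>" and A: "1 \<le> A" "exp 1 / (2 * \<eta>) \<le> A"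
    and Q: "Q = A\<^sup>2 * exp 3 / (2 * \<eta>)" and "Q * eps \<le> 1/16"
  shows "1 - 128 * A * Q / real K
    \<le> measure_pmf.prob (pmf_of_set (idx_space K n)) {k. is_expander eps (1/2) C b K k}"
proof -
  have "0 < K"
    using K by (cases K) auto
  have "3 * b \<le> n"
    using \<open>C \<ge> 3\<close> \<open>C * b \<le> n\<close> by (meson le_trans mult_le_mono1)
  have card: "card (idx_space K n) = 2 ^ (n * K)"
    by (simp add: idx_space_def card_PiE power_mult)
  have "finite (idx_space K n)"
    by (simp add: idx_space_def finite_PiE)
  moreover have "idx_space K n \<noteq> {}"
    using card by auto
  ultimately have prob_eq: "measure_pmf.prob (pmf_of_set (idx_space K n)) {k. is_expander eps (1/2) C b K k}
      = 1 - real (card {k \<in> idx_space K n. \<not> is_expander eps (1/2) C b K k}) / 2 ^ (n * K)"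
    by (simp add: measure_pmf_of_set_Collect card)
  have "real (card {k \<in> idx_space K n. \<not> is_expander eps (1/2) C b K k})
      \<le> 2 ^ (n * K) * (128 * A * Q / real K)"
  proof (rule order.trans[OF card_non_expanders_le[OF \<open>C \<ge> 3\<close> \<open>3 * b \<le> n\<close>]])
    show "eps * real K \<le> 2 * 2 ^ b"
      using K mult_right_mono[OF \<open>eps \<le> 2 * \<eta>\<close>, of "real K"] by simp
    have "real (2 ^ b :: nat) = \<eta> * real K"
      using K by simp
    then show "2 ^ (n * K) * (\<Sum>s\<in>{s\<in>{2..K}. real s \<le> eps * real K}. real (K choose s) *
        (real (2 ^ b choose (s div 2)) * (real (s div 2) / real (2 ^ b)) ^ s) ^ 3)
      \<le> 2 ^ (n * K) * (128 * A * Q / real K)"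
      by (intro mult_left_mono sum_union_bound_terms_le[OF \<open>\<eta> > 0\<close> \<open>0 < K\<close> _ \<open>eps \<le> 2 * \<eta>\<close>
          A Q \<open>Q * eps \<le> 1/16\<close>]) simp_all
  qed
  then have "real (card {k \<in> idx_space K n. \<not> is_expander eps (1/2) C b K k}) / 2 ^ (n * K)
      \<le> 128 * A * Q / real K"
    by (simp add: pos_divide_le_eq mult_ac)
  with prob_eq show ?thesis
    by linarith
qed

theorem lemma4:
  fixes \<delta> \<eta> :: real and C :: nat
  assumes "0 < \<delta>" and "\<delta> \<le> 1/3" and "\<eta> > 0" and "C \<ge> 3"
  shows "\<exists>eps > 0. \<exists>M :: real. \<forall>n b K :: nat.
           n \<ge> 1 \<longrightarrow> b > 0 \<longrightarrow> real b = \<delta> * real n \<longrightarrow>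
           (2::real) ^ b = \<eta> * real K \<longrightarrow> C * b \<le> n \<longrightarrow>
           measure_pmf.prob (pmf_of_set (idx_space K n))
              {k. is_expander eps (1/2) C b K k} \<ge> 1 - M / real K"
proof -
  define A where "A = max 1 (exp 1 / (2 * \<eta>))"
  define Q where "Q = A\<^sup>2 * exp 3 / (2 * \<eta>)"
  define eps where "eps = min (2 * \<eta>) (1 / (16 * Q))"
  have A: "1 \<le> A" "exp 1 / (2 * \<eta>) \<le> A"
    by (simp_all add: A_def)
  then have "0 < Q"
    using \<open>\<eta> > 0\<close> by (simp add: Q_def)
  have "eps \<le> 2 * \<eta>" "0 < eps"
    using \<open>0 < Q\<close> \<open>\<eta> > 0\<close> by (simp_all add: eps_def)
  have "Q * eps \<le> Q * (1 / (16 * Q))"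
    using \<open>0 < Q\<close> by (intro mult_left_mono) (simp_all add: eps_def)
  then have "Q * eps \<le> 1/16"
    using \<open>0 < Q\<close> by simp
  show ?thesis
    using \<open>0 < eps\<close> prob_expander_ge[OF \<open>\<eta> > 0\<close> \<open>C \<ge> 3\<close> _ _ \<open>eps \<le> 2 * \<eta>\<close> A Q_def
        \<open>Q * eps \<le> 1/16\<close>]
    by blast
qed

end
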